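(* Every two-directional orthogonal ray graph $G$ with given bipartition $(U,V)$ and without twins has at least one normalized representation.
   Context: All graphs are finite and simple. $G$ is a bipartite graph with a fixed bipartition $(U,V)$; $N(x)$ denotes the open neighborhood of $x$. Standing assumption: $G$ has no twins, i.e. no two distinct vertices $x\neq y$ with $N(x)=N(y)$. A representation of $G$ is a pair $(<_x,<_y)$ of linear orders on $V(G)$ such that for all $u\in U$ and $v\in V$: $uv\in E(G)$ iff ($u<_x v$ and $u<_y v$). $G$ is a two-directional orthogonal ray graph if it has a representation. A representation $(<_x,<_y)$ is normalized if: (a) for all $u_1,u_2\in U$: ($u_1<_x u_2$ and $u_1<_y u_2$) iff $N(u_1)\supsetneq N(u_2)$; (b) for all $v_1,v_2\in V$: ($v_1<_x v_2$ and $v_1<_y v_2$) iff $N(v_1)\subsetneq N(v_2)$; (c) for all $u\in U$, $v\in V$: ($v<_x u$ and $v<_y u$) iff for every $v'\in N(u)$, $N(v)\subsetneq N(v')$. *)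

theory Defs
  imports Main
begin

definition bipartite_graph :: "'a set \<Rightarrow> 'a set \<Rightarrow> ('a \<Rightarrow> 'a \<Rightarrow> bool) \<Rightarrow> bool" where
  "bipartite_graph U V E \<longleftrightarrow>
     finite U \<and> finite V \<and> U \<inter> V = {} \<and>
     (\<forall>x y. E x y \<longrightarrow> E y x) \<and>
     (\<forall>x y. E x y \<longrightarrow> (x \<in> U \<and> y \<in> V) \<or> (x \<in> V \<and> y \<in> U))"

definition nbhd :: "('a \<Rightarrow> 'a \<Rightarrow> bool) \<Rightarrow> 'a \<Rightarrow> 'a set" where
  "nbhd E x = {y. E x y}"

definition twin_free :: "'a set \<Rightarrow> 'a set \<Rightarrow> ('a \<Rightarrow> 'a \<Rightarrow> bool) \<Rightarrow> bool" where
  "twin_free U V E \<longleftrightarrow>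
     (\<forall>x\<in>U \<union> V. \<forall>y\<in>U \<union> V. x \<noteq> y \<longrightarrow> nbhd E x \<noteq> nbhd E y)"

definition strict_linear_order_on :: "'a set \<Rightarrow> ('a \<Rightarrow> 'a \<Rightarrow> bool) \<Rightarrow> bool" where
  "strict_linear_order_on S r \<longleftrightarrow>
     (\<forall>x y. r x y \<longrightarrow> x \<in> S \<and> y \<in> S) \<and>
     (\<forall>x\<in>S. \<not> r x x) \<and>
     (\<forall>x\<in>S. \<forall>y\<in>S. \<forall>z\<in>S. r x y \<longrightarrow> r y z \<longrightarrow> r x z) \<and>
     (\<forall>x\<in>S. \<forall>y\<in>S. x \<noteq> y \<longrightarrow> r x y \<or> r y x)"

definition representation ::
  "'a set \<Rightarrow> 'a set \<Rightarrow> ('a \<Rightarrow> 'a \<Rightarrow> bool) \<Rightarrow> ('a \<Rightarrow> 'a \<Rightarrow> bool) \<Rightarrow> ('a \<Rightarrow> 'a \<Rightarrow> bool) \<Rightarrow> bool" where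
  "representation U V E lx ly \<longleftrightarrow>
     strict_linear_order_on (U \<union> V) lx \<and> strict_linear_order_on (U \<union> V) ly \<and>
     (\<forall>u\<in>U. \<forall>v\<in>V. E u v \<longleftrightarrow> (lx u v \<and> ly u v))"

definition tdor_graph :: "'a set \<Rightarrow> 'a set \<Rightarrow> ('a \<Rightarrow> 'a \<Rightarrow> bool) \<Rightarrow> bool" where
  "tdor_graph U V E \<longleftrightarrow> (\<exists>lx ly. representation U V E lx ly)"

definition normalized_representation ::
  "'a set \<Rightarrow> 'a set \<Rightarrow> ('a \<Rightarrow> 'a \<Rightarrow> bool) \<Rightarrow> ('a \<Rightarrow> 'a \<Rightarrow> bool) \<Rightarrow> ('a \<Rightarrow> 'a \<Rightarrow> bool) \<Rightarrow> bool" where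
  "normalized_representation U V E lx ly \<longleftrightarrow>
     representation U V E lx ly \<and>
     (\<forall>u1\<in>U. \<forall>u2\<in>U. (lx u1 u2 \<and> ly u1 u2) \<longleftrightarrow> nbhd E u1 \<supset> nbhd E u2) \<and>
     (\<forall>v1\<in>V. \<forall>v2\<in>V. (lx v1 v2 \<and> ly v1 v2) \<longleftrightarrow> nbhd E v1 \<subset> nbhd E v2) \<and>
     (\<forall>u\<in>U. \<forall>v\<in>V. (lx v u \<and> ly v u) \<longleftrightarrow>
        (\<forall>v'\<in>nbhd E u. nbhd E v \<subset> nbhd E v'))"

end

theory Submission
  imports Defs "HOL-Library.Product_Lexorder"
begin

text \<open>
  Each order of a given representation is replaced by the order that sorts the vertices
  lexicographically by a key of three cardinalities, ties being broken by the old order.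
  The first component never lets an edge \<open>uv\<close> point downwards and never lets \<open>v \<in> V\<close>
  overtake \<open>u \<in> U\<close> when it was below \<open>u\<close>, so the two new orders again form a
  representation. The other two components make both new orders follow strict inclusion
  of neighbourhoods, which yields the "if" halves of normalization; the "only if" halves
  hold in every representation of a twin-free graph.
\<close>

lemma strict_linear_order_on_irrefl: "strict_linear_order_on S r \<Longrightarrow> \<not> r x x"
  unfolding strict_linear_order_on_def by blast

lemma strict_linear_order_on_trans:
  "strict_linear_order_on S r \<Longrightarrow> r x y \<Longrightarrow> r y z \<Longrightarrow> r x z"
  unfolding strict_linear_order_on_def by blast

lemma strict_linear_order_on_asym: "strict_linear_order_on S r \<Longrightarrow> r x y \<Longrightarrow> \<not> r y x"
  by (metis strict_linear_order_on_irrefl strict_linear_order_on_trans)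

lemma strict_linear_order_on_total:
  "strict_linear_order_on S r \<Longrightarrow> x \<in> S \<Longrightarrow> y \<in> S \<Longrightarrow> x \<noteq> y \<Longrightarrow> r x y \<or> r y x"
  unfolding strict_linear_order_on_def by blast

definition refine_by_key :: "'a set \<Rightarrow> ('a \<Rightarrow> 'b::linorder) \<Rightarrow> ('a \<Rightarrow> 'a \<Rightarrow> bool) \<Rightarrow> 'a \<Rightarrow> 'a \<Rightarrow> bool"
  where "refine_by_key S f r a b \<longleftrightarrow> a \<in> S \<and> b \<in> S \<and> (f a < f b \<or> f a = f b \<and> r a b)"

lemma strict_linear_order_on_refine_by_key:
  assumes "strict_linear_order_on S r"
  shows "strict_linear_order_on S (refine_by_key S f r)"
  using strict_linear_order_on_irrefl[OF assms] strict_linear_order_on_trans[OF assms]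
    strict_linear_order_on_total[OF assms]
  unfolding strict_linear_order_on_def refine_by_key_def
  by (smt (verit) order.strict_trans linorder_neq_iff)

lemma refine_by_keyI: "a \<in> S \<Longrightarrow> b \<in> S \<Longrightarrow> f a < f b \<Longrightarrow> refine_by_key S f r a b"
  by (simp add: refine_by_key_def)

lemma bipartite_graph_finite: "bipartite_graph U V E \<Longrightarrow> finite (U \<union> V)"
  unfolding bipartite_graph_def by blast

lemma bipartite_graph_disjoint: "bipartite_graph U V E \<Longrightarrow> U \<inter> V = {}"
  unfolding bipartite_graph_def by blast

lemma bipartite_graph_nbhd_sym: "bipartite_graph U V E \<Longrightarrow> x \<in> nbhd E y \<longleftrightarrow> y \<in> nbhd E x"
  unfolding bipartite_graph_def nbhd_def by blast

lemma bipartite_graph_nbhd_left: "bipartite_graph U V E \<Longrightarrow> u \<in> U \<Longrightarrow> nbhd E u \<subseteq> V"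
  unfolding bipartite_graph_def nbhd_def by blast

lemma bipartite_graph_nbhd_right: "bipartite_graph U V E \<Longrightarrow> v \<in> V \<Longrightarrow> nbhd E v \<subseteq> U"
  unfolding bipartite_graph_def nbhd_def by blast

locale edge_compatible_order =
  fixes U V :: "'a set" and E :: "'a \<Rightarrow> 'a \<Rightarrow> bool" and r :: "'a \<Rightarrow> 'a \<Rightarrow> bool"
  assumes bipartite: "bipartite_graph U V E"
    and linear: "strict_linear_order_on (U \<union> V) r"
    and edge_upward: "\<And>u v. u \<in> U \<Longrightarrow> v \<in> V \<Longrightarrow> E u v \<Longrightarrow> r u v"
begin

definition below_nbhd :: "'a \<Rightarrow> 'a set"
  where "below_nbhd u = {w \<in> U \<union> V. \<forall>v \<in> nbhd E u. r w v}"

definition below_nbhd_of_nbhd :: "'a \<Rightarrow> 'a set"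
  where "below_nbhd_of_nbhd v = (\<Union>u \<in> nbhd E v. below_nbhd u)"

definition nbhd_subsets :: "'a \<Rightarrow> 'a set"
  where "nbhd_subsets v = {v' \<in> V. nbhd E v' \<subseteq> nbhd E v}"

definition below_all_nbhd :: "'a \<Rightarrow> 'a set"
  where "below_all_nbhd u = {v' \<in> V. \<forall>v \<in> nbhd E u. nbhd E v' \<subset> nbhd E v}"

text \<open>
  The first component places \<open>u \<in> U\<close> at the position of its lowest neighbour and
  \<open>v \<in> V\<close> at the highest of these positions among its neighbours. The \<open>+ 1\<close> in the
  third component puts every \<open>u \<in> U\<close> above every \<open>v \<in> V\<close> there.
\<close>
definition key :: "'a \<Rightarrow> nat \<times> nat \<times> nat"
  where "key w =
    (if w \<in> U then (card (below_nbhd w), card (below_all_nbhd w), card V + 1 - card (nbhd E w))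
     else (card (below_nbhd_of_nbhd w), card (nbhd_subsets w), 0))"

definition normal_order :: "'a \<Rightarrow> 'a \<Rightarrow> bool"
  where "normal_order = refine_by_key (U \<union> V) key r"

lemma strict_linear_order_on_normal_order: "strict_linear_order_on (U \<union> V) normal_order"
  unfolding normal_order_def by (rule strict_linear_order_on_refine_by_key[OF linear])

lemma normal_orderI: "a \<in> U \<union> V \<Longrightarrow> b \<in> U \<union> V \<Longrightarrow> key a < key b \<Longrightarrow> normal_order a b"
  unfolding normal_order_def by (rule refine_by_keyI)

lemma disjoint: "U \<inter> V = {}"
  using bipartite by (rule bipartite_graph_disjoint)

lemma finite_V: "finite V"
  using bipartite_graph_finite[OF bipartite] by simp

lemma card_mono_in_graph: "A \<subseteq> B \<Longrightarrow> B \<subseteq> U \<union> V \<Longrightarrow> card A \<le> card B"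
  by (meson bipartite bipartite_graph_finite card_mono finite_subset)

lemma card_psubset_in_graph: "A \<subset> B \<Longrightarrow> B \<subseteq> U \<union> V \<Longrightarrow> card A < card B"
  by (meson bipartite bipartite_graph_finite psubset_card_mono finite_subset)

lemma below_nbhd_subset: "below_nbhd u \<subseteq> U \<union> V"
  by (auto simp: below_nbhd_def)

lemma below_nbhd_of_nbhd_subset: "below_nbhd_of_nbhd v \<subseteq> U \<union> V"
  using below_nbhd_subset by (auto simp: below_nbhd_of_nbhd_def)

lemma nbhd_subsets_subset: "nbhd_subsets v \<subseteq> U \<union> V"
  by (auto simp: nbhd_subsets_def)

lemma below_all_nbhd_subset: "below_all_nbhd u \<subseteq> U \<union> V"
  by (auto simp: below_all_nbhd_def)

lemma card_nbhd_le: "u \<in> U \<Longrightarrow> card (nbhd E u) \<le> card V"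
  using bipartite_graph_nbhd_left[OF bipartite] card_mono[OF finite_V] by blast

lemma below_neighbour: "u \<in> U \<Longrightarrow> v \<in> nbhd E u \<Longrightarrow> r u v"
  using bipartite_graph_nbhd_left[OF bipartite] edge_upward by (auto simp: nbhd_def)

lemma normal_order_edge:
  assumes u: "u \<in> U" and v: "v \<in> V" and uv: "E u v"
  shows "normal_order u v"
proof (rule normal_orderI)
  have "u \<in> nbhd E v"
    using uv bipartite_graph_nbhd_sym[OF bipartite] by (simp add: nbhd_def)
  then have "below_nbhd u \<subseteq> below_nbhd_of_nbhd v"
    by (auto simp: below_nbhd_of_nbhd_def)
  then have "card (below_nbhd u) \<le> card (below_nbhd_of_nbhd v)"
    using card_mono_in_graph below_nbhd_of_nbhd_subset by blast
  moreover have "below_all_nbhd u \<subset> nbhd_subsets v"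
    using uv v by (auto simp: below_all_nbhd_def nbhd_subsets_def nbhd_def)
  then have "card (below_all_nbhd u) < card (nbhd_subsets v)"
    using card_psubset_in_graph nbhd_subsets_subset by blast
  ultimately show "key u < key v"
    using u v disjoint by (auto simp: key_def)
qed (use u v in auto)

lemma normal_order_reversed:
  assumes u: "u \<in> U" and v: "v \<in> V" and vu: "r v u"
  shows "normal_order v u"
proof (rule normal_orderI)
  \<comment> \<open>everything counted for \<open>v\<close> lies below \<open>v\<close>, whereas \<open>u\<close> also counts \<open>v\<close> itself\<close>
  have "below_nbhd_of_nbhd v \<subseteq> {w \<in> U \<union> V. r w v}"
    using bipartite_graph_nbhd_right[OF bipartite v] below_neighbour
      bipartite_graph_nbhd_sym[OF bipartite]
    by (auto simp: below_nbhd_of_nbhd_def below_nbhd_def)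
  also have "\<dots> \<subset> below_nbhd u"
  proof -
    have "r w v \<Longrightarrow> r w u" for w
      using strict_linear_order_on_trans[OF linear] vu by blast
    then have "{w \<in> U \<union> V. r w v} \<subseteq> below_nbhd u" "v \<in> below_nbhd u"
      using strict_linear_order_on_trans[OF linear] below_neighbour[OF u] vu v
      by (auto simp: below_nbhd_def)
    then show ?thesis
      using strict_linear_order_on_irrefl[OF linear] by blast
  qed
  finally show "key v < key u"
    using card_psubset_in_graph[OF _ below_nbhd_subset] u v disjoint by (auto simp: key_def)
qed (use u v in auto)

lemma normal_order_nbhd_psupset:
  assumes u1: "u1 \<in> U" and u2: "u2 \<in> U" and nbhd: "nbhd E u1 \<supset> nbhd E u2"
  shows "normal_order u1 u2"
proof (rule normal_orderI)
  have "below_nbhd u1 \<subseteq> below_nbhd u2"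
    using nbhd by (auto simp: below_nbhd_def)
  then have "card (below_nbhd u1) \<le> card (below_nbhd u2)"
    using card_mono_in_graph below_nbhd_subset by blast
  moreover have "below_all_nbhd u1 \<subseteq> below_all_nbhd u2"
    using nbhd by (auto simp: below_all_nbhd_def)
  then have "card (below_all_nbhd u1) \<le> card (below_all_nbhd u2)"
    using card_mono_in_graph below_all_nbhd_subset by blast
  moreover have "card (nbhd E u2) < card (nbhd E u1)"
    using card_psubset_in_graph nbhd bipartite_graph_nbhd_left[OF bipartite u1] by blast
  ultimately show "key u1 < key u2"
    using u1 u2 card_nbhd_le[OF u1] by (auto simp: key_def)
qed (use u1 u2 in auto)

lemma normal_order_nbhd_psubset:
  assumes v1: "v1 \<in> V" and v2: "v2 \<in> V" and nbhd: "nbhd E v1 \<subset> nbhd E v2"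
  shows "normal_order v1 v2"
proof (rule normal_orderI)
  have "below_nbhd_of_nbhd v1 \<subseteq> below_nbhd_of_nbhd v2"
    using nbhd by (auto simp: below_nbhd_of_nbhd_def)
  then have "card (below_nbhd_of_nbhd v1) \<le> card (below_nbhd_of_nbhd v2)"
    using card_mono_in_graph below_nbhd_of_nbhd_subset by blast
  moreover have "nbhd_subsets v1 \<subset> nbhd_subsets v2"
    using nbhd v2 by (auto simp: nbhd_subsets_def)
  then have "card (nbhd_subsets v1) < card (nbhd_subsets v2)"
    using card_psubset_in_graph nbhd_subsets_subset by blast
  ultimately show "key v1 < key v2"
    using v1 v2 disjoint by (auto simp: key_def)
qed (use v1 v2 in auto)

lemma normal_order_below_all_nbhd:
  assumes u: "u \<in> U" and v: "v \<in> V" and below: "\<forall>v' \<in> nbhd E u. nbhd E v \<subset> nbhd E v'"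
  shows "normal_order v u"
proof (rule normal_orderI)
  have "below_nbhd_of_nbhd v \<subseteq> below_nbhd u"
    using below bipartite_graph_nbhd_sym[OF bipartite]
    by (fastforce simp: below_nbhd_of_nbhd_def below_nbhd_def)
  then have "card (below_nbhd_of_nbhd v) \<le> card (below_nbhd u)"
    using card_mono_in_graph below_nbhd_subset by blast
  moreover have "nbhd_subsets v \<subseteq> below_all_nbhd u"
    using below by (auto simp: nbhd_subsets_def below_all_nbhd_def)
  then have "card (nbhd_subsets v) \<le> card (below_all_nbhd u)"
    using card_mono_in_graph below_all_nbhd_subset by blast
  ultimately show "key v < key u"
    using u v disjoint card_nbhd_le[OF u] by (auto simp: key_def)
qed (use u v in auto)

end

lemma representation_edge_iff:
  "representation U V E lx ly \<Longrightarrow> u \<in> U \<Longrightarrow> v \<in> V \<Longrightarrow> E u v \<longleftrightarrow> lx u v \<and> ly u v"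
  by (simp add: representation_def)

lemma edge_compatible_orders:
  assumes "bipartite_graph U V E" and "representation U V E lx ly"
  shows "edge_compatible_order U V E lx" and "edge_compatible_order U V E ly"
  using assms by (simp_all add: edge_compatible_order_def representation_def)

lemma representation_normal_orders:
  assumes "bipartite_graph U V E" and rep: "representation U V E lx ly"
  shows "representation U V E
    (edge_compatible_order.normal_order U V E lx) (edge_compatible_order.normal_order U V E ly)"
proof -
  interpret X: edge_compatible_order U V E lx using edge_compatible_orders[OF assms] by simp
  interpret Y: edge_compatible_order U V E ly using edge_compatible_orders[OF assms] by simp
  have lx: "strict_linear_order_on (U \<union> V) lx" and ly: "strict_linear_order_on (U \<union> V) ly"
    using rep by (simp_all add: representation_def)
  have "X.normal_order v u \<or> Y.normal_order v u"
    if "u \<in> U" "v \<in> V" "\<not> E u v" for u v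
  proof -
    have "lx v u \<or> ly v u"
      using that representation_edge_iff[OF rep] X.disjoint
        strict_linear_order_on_total[OF lx, of u v] strict_linear_order_on_total[OF ly, of u v]
      by blast
    then show ?thesis
      using X.normal_order_reversed Y.normal_order_reversed that by blast
  qed
  then show ?thesis
    unfolding representation_def
    using X.strict_linear_order_on_normal_order Y.strict_linear_order_on_normal_order
      X.normal_order_edge Y.normal_order_edge
      strict_linear_order_on_asym[OF X.strict_linear_order_on_normal_order]
      strict_linear_order_on_asym[OF Y.strict_linear_order_on_normal_order]
    by blast
qed

lemma representation_nbhd_left_antimono:
  assumes bip: "bipartite_graph U V E" and rep: "representation U V E lx ly"
    and "u1 \<in> U" and u2: "u2 \<in> U" and "lx u1 u2" and "ly u1 u2"
  shows "nbhd E u2 \<subseteq> nbhd E u1"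
  using assms bipartite_graph_nbhd_left[OF bip u2] representation_edge_iff[OF rep]
    strict_linear_order_on_trans[of "U \<union> V" lx] strict_linear_order_on_trans[of "U \<union> V" ly]
  unfolding representation_def nbhd_def by blast

lemma representation_nbhd_right_mono:
  assumes bip: "bipartite_graph U V E" and rep: "representation U V E lx ly"
    and v1: "v1 \<in> V" and v2: "v2 \<in> V" and "lx v1 v2" and "ly v1 v2"
  shows "nbhd E v1 \<subseteq> nbhd E v2"
proof
  fix u assume "u \<in> nbhd E v1"
  then have u: "u \<in> U" and "E u v1"
    using bipartite_graph_nbhd_right[OF bip v1] bipartite_graph_nbhd_sym[OF bip]
    by (auto simp: nbhd_def)
  then have "lx u v2 \<and> ly u v2"
    using assms representation_edge_iff[OF rep]
      strict_linear_order_on_trans[of "U \<union> V" lx] strict_linear_order_on_trans[of "U \<union> V" ly]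
    unfolding representation_def by blast
  then show "u \<in> nbhd E v2"
    using representation_edge_iff[OF rep u v2] bipartite_graph_nbhd_sym[OF bip]
    by (simp add: nbhd_def)
qed

lemma twin_free_nbhd_neq:
  "twin_free U V E \<Longrightarrow> x \<in> U \<union> V \<Longrightarrow> y \<in> U \<union> V \<Longrightarrow> x \<noteq> y \<Longrightarrow> nbhd E x \<noteq> nbhd E y"
  by (simp add: twin_free_def)

lemma normalized_representationI:
  assumes bip: "bipartite_graph U V E" and tf: "twin_free U V E"
    and rep: "representation U V E lx ly"
    and a: "\<And>u1 u2. u1 \<in> U \<Longrightarrow> u2 \<in> U \<Longrightarrow> nbhd E u1 \<supset> nbhd E u2 \<Longrightarrow> lx u1 u2 \<and> ly u1 u2"
    and b: "\<And>v1 v2. v1 \<in> V \<Longrightarrow> v2 \<in> V \<Longrightarrow> nbhd E v1 \<subset> nbhd E v2 \<Longrightarrow> lx v1 v2 \<and> ly v1 v2"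
    and c: "\<And>u v. u \<in> U \<Longrightarrow> v \<in> V \<Longrightarrow> \<forall>v' \<in> nbhd E u. nbhd E v \<subset> nbhd E v' \<Longrightarrow> lx v u \<and> ly v u"
  shows "normalized_representation U V E lx ly"
proof -
  have lx: "strict_linear_order_on (U \<union> V) lx" and ly: "strict_linear_order_on (U \<union> V) ly"
    using rep by (simp_all add: representation_def)
  have left: "lx u1 u2 \<and> ly u1 u2 \<longleftrightarrow> nbhd E u1 \<supset> nbhd E u2" if "u1 \<in> U" "u2 \<in> U" for u1 u2
  proof
    assume "lx u1 u2 \<and> ly u1 u2"
    moreover from this have "u1 \<noteq> u2"
      using strict_linear_order_on_irrefl[OF lx] by blast
    ultimately show "nbhd E u1 \<supset> nbhd E u2"
      using representation_nbhd_left_antimono[OF bip rep that] twin_free_nbhd_neq[OF tf, of u1 u2] that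
      by blast
  qed (use a that in blast)
  have right: "lx v1 v2 \<and> ly v1 v2 \<longleftrightarrow> nbhd E v1 \<subset> nbhd E v2" if "v1 \<in> V" "v2 \<in> V" for v1 v2
  proof
    assume "lx v1 v2 \<and> ly v1 v2"
    moreover from this have "v1 \<noteq> v2"
      using strict_linear_order_on_irrefl[OF lx] by blast
    ultimately show "nbhd E v1 \<subset> nbhd E v2"
      using representation_nbhd_right_mono[OF bip rep that] twin_free_nbhd_neq[OF tf, of v1 v2] that
      by blast
  qed (use b that in blast)
  have cross: "lx v u \<and> ly v u \<longleftrightarrow> (\<forall>v' \<in> nbhd E u. nbhd E v \<subset> nbhd E v')"
    if u: "u \<in> U" and v: "v \<in> V" for u v
  proof (intro iffI ballI)
    fix v' assume vu: "lx v u \<and> ly v u" and v': "v' \<in> nbhd E u"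
    then have "v' \<in> V" "lx u v'" "ly u v'"
      using bipartite_graph_nbhd_left[OF bip u] representation_edge_iff[OF rep u]
      by (auto simp: nbhd_def)
    then show "nbhd E v \<subset> nbhd E v'"
      using right[OF v] vu strict_linear_order_on_trans[OF lx] strict_linear_order_on_trans[OF ly]
      by blast
  qed (use c u v in blast)
  show ?thesis
    unfolding normalized_representation_def by (simp add: rep left right cross)
qed

theorem mainTheorem2:
  fixes U V :: "'a set" and E :: "'a \<Rightarrow> 'a \<Rightarrow> bool"
  assumes "bipartite_graph U V E"
    and "twin_free U V E"
    and "tdor_graph U V E"
  shows "\<exists>lx ly. normalized_representation U V E lx ly"
proof -
  obtain lx ly where rep: "representation U V E lx ly"
    using assms(3) by (auto simp: tdor_graph_def)
  interpret X: edge_compatible_order U V E lx using edge_compatible_orders[OF assms(1) rep] by simp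
  interpret Y: edge_compatible_order U V E ly using edge_compatible_orders[OF assms(1) rep] by simp
  have "normalized_representation U V E X.normal_order Y.normal_order"
    by (rule normalized_representationI[OF assms(1,2) representation_normal_orders[OF assms(1) rep]])
      (simp_all add: X.normal_order_nbhd_psupset Y.normal_order_nbhd_psupset
        X.normal_order_nbhd_psubset Y.normal_order_nbhd_psubset
        X.normal_order_below_all_nbhd Y.normal_order_below_all_nbhd)
  then show ?thesis by blast
qed

end
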